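(* Let $I=[0,1]$ and $f_{1,\infty}$ a sequence of continuous self-maps of $I$. Then $(I,f_{1,\infty})$ is weakly mixing of order $3$ if and only if $(\mathcal{M}(I),\widetilde{f}_{1,\infty})$ is weakly mixing of order $3$.
   Context: For $f_{1,\infty}=\{f_n\}_{n\ge1}$ write $f_1^n=f_n\circ\cdots\circ f_1$. $\mathcal{M}(I)$ is the space of Borel probability measures on $I$ with the weak$^*$ topology, and $\widetilde{f}_1^n(\mu)(A)=\mu((f_1^n)^{-1}(A))$ for Borel $A$. A non-autonomous system $(Y,g_{1,\infty})$ is weakly mixing of order $m$ ($m\ge2$) if for any non-empty open sets $U_1,\dots,U_m,V_1,\dots,V_m\subseteq Y$ there is $n\in\mathbb{N}$ with $g_1^n(U_i)\cap V_i\neq\emptyset$ for all $1\le i\le m$. *)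

theory Defs
  imports "HOL-Analysis.Analysis" "HOL-Probability.Probability"
begin

text \<open>Composition of a non-autonomous system: comp_seq g n = g n o ... o g 1
  (and comp_seq g 0 = id). Only g 1, g 2, ... are used.\<close>
fun comp_seq :: "(nat \<Rightarrow> 'a \<Rightarrow> 'a) \<Rightarrow> nat \<Rightarrow> 'a \<Rightarrow> 'a" where
  "comp_seq g 0 = id"
| "comp_seq g (Suc n) = g (Suc n) \<circ> comp_seq g n"

text \<open>Weak mixing of order m of the non-autonomous system (Y, g_{1,infinity}),
  Y given as a topological space X. Indices 1..m are rendered as 0..<m.\<close>
definition weakly_mixing_order ::
  "nat \<Rightarrow> 'a topology \<Rightarrow> (nat \<Rightarrow> 'a \<Rightarrow> 'a) \<Rightarrow> bool" where
  "weakly_mixing_order m X g \<longleftrightarrow>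
     (\<forall>U V :: nat \<Rightarrow> 'a set.
        (\<forall>i<m. openin X (U i) \<and> U i \<noteq> {} \<and> openin X (V i) \<and> V i \<noteq> {}) \<longrightarrow>
        (\<exists>n\<ge>1. \<forall>i<m. comp_seq g n ` (U i) \<inter> V i \<noteq> {}))"

definition borel_I :: "real measure" where
  "borel_I = restrict_space borel {0..1}"

definition prob_measures_I :: "real measure set" where
  "prob_measures_I = {\<mu>. prob_space \<mu> \<and> sets \<mu> = sets borel_I}"

definition weak_star_topology_I :: "real measure topology" where
  "weak_star_topology_I = topology_generated_by
     {{\<mu> \<in> prob_measures_I. (\<integral>x. g x \<partial>\<mu>) \<in> W} | (g :: real \<Rightarrow> real) (W :: real set).
        continuous_on {0..1} g \<and> open W}"

definition pushforward_I :: "(real \<Rightarrow> real) \<Rightarrow> real measure \<Rightarrow> real measure" where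
  "pushforward_I h \<mu> = distr \<mu> borel_I h"

end

theory Submission
  imports Defs
begin

text \<open>
  From \<open>\<M>(I)\<close> to \<open>I\<close>: for a tent function \<open>bump c r\<close>, the measures \<open>\<mu>\<close> with
  \<open>\<integral> bump c r d\<mu> > 1/2\<close> form a weak* open set containing the Dirac mass at \<open>c\<close>; if both
  \<open>\<mu>\<close> and \<open>(f\<^sub>1\<^sup>n)\<^sub>*\<mu>\<close> are of this kind for balls \<open>B\<close>, \<open>B'\<close>, then the two bump integrals
  cannot both exceed \<open>1/2\<close> unless some point of \<open>B\<close> is mapped into \<open>B'\<close>.

  From \<open>I\<close> to \<open>\<M>(I)\<close>: weak mixing of order 3 can be realised at arbitrarily late times.
  For the pairs \<open>(B, near 0)\<close>, \<open>(B, near 1)\<close>, \<open>(B', near 1/2)\<close>, connectedness gives a time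
  at which the image of \<open>B\<close> contains the image of a small ball inside \<open>B'\<close>. Iterating over
  finitely many balls yields one time and one small ball whose image lies in all their images
  and, mixing once more, covers almost all of \<open>I\<close>. On a \<open>\<delta>\<close>-grid this produces, for every
  \<open>\<delta>\<close>, a time \<open>n\<close> and a measurable step function \<open>\<phi> : I\<^sup>2 \<rightarrow> I\<close> with \<open>\<phi> \<approx> fst\<close> and
  \<open>f\<^sub>1\<^sup>n \<circ> \<phi> \<approx> snd\<close>. Pushing \<open>\<mu> \<otimes> \<nu>\<close> forward by \<open>\<phi>\<close> gives a measure weak* close to \<open>\<mu>\<close>
  whose image under \<open>f\<^sub>1\<^sup>n\<close> is close to \<open>\<nu>\<close>, simultaneously for finitely many pairs \<open>(\<mu>, \<nu>)\<close>.
\<close>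

section \<open>Non-autonomous interval maps\<close>

definition ball_I :: "real \<Rightarrow> real \<Rightarrow> real set" where
  "ball_I c r = {x \<in> {0..1}. \<bar>x - c\<bar> < r}"

lemma ball_I_eq: "ball_I c r = {0..1} \<inter> ball c r"
  by (auto simp: ball_I_def dist_real_def)

lemma ball_I_subset: "ball_I c r \<subseteq> {0..1}"
  by (auto simp: ball_I_def)

lemma centre_in_ball_I: "c \<in> {0..1} \<Longrightarrow> 0 < r \<Longrightarrow> c \<in> ball_I c r"
  by (simp add: ball_I_def)

lemma ball_I_nonempty: "c \<in> {0..1} \<Longrightarrow> 0 < r \<Longrightarrow> ball_I c r \<noteq> {}"
  using centre_in_ball_I by blast

lemma openin_ball_I: "openin (top_of_set {0..1}) (ball_I c r)"
  by (simp add: ball_I_eq openin_subtopology_Int2)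

lemma connected_ball_I: "connected (ball_I c r)"
  by (simp add: ball_I_eq convex_connected convex_Int)

lemma ball_I_subset_ball_I: "\<bar>y - c\<bar> < r \<Longrightarrow> ball_I y (min e (r - \<bar>y - c\<bar>)) \<subseteq> ball_I c r"
  by (auto simp: ball_I_def)

lemma openin_contains_ball_I:
  assumes "openin (top_of_set {0..1}) U" "x \<in> U"
  obtains r where "0 < r" "ball_I x r \<subseteq> U"
proof -
  obtain T where T: "open T" "U = T \<inter> {0..1}"
    using assms(1) by (auto simp: openin_subtopology)
  then obtain r where "0 < r" "ball x r \<subseteq> T"
    using assms(2) open_contains_ball by blast
  with T show thesis
    by (intro that[of r]) (auto simp: ball_I_eq)
qed

lemma ball_I_other_point:
  assumes "d \<in> {0..1}" "0 < s"
  obtains y where "y \<in> ball_I d s" "y \<noteq> z"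
proof (cases "d = z")
  case False
  then show thesis using that centre_in_ball_I assms by blast
next
  case True
  define y where "y = (if d \<le> 1/2 then d + min s (1/2) / 2 else d - min s (1/2) / 2)"
  have "y \<in> ball_I d s" "y \<noteq> z"
    using assms True by (auto simp: y_def ball_I_def min_def)
  then show thesis by (rule that)
qed

lemma weakly_mixing_order_mono:
  assumes wm: "weakly_mixing_order m X g" and "0 < k" "k \<le> m"
  shows "weakly_mixing_order k X g"
  unfolding weakly_mixing_order_def
proof (intro allI impI)
  fix U V :: "nat \<Rightarrow> 'a set"
  assume UV: "\<forall>i<k. openin X (U i) \<and> U i \<noteq> {} \<and> openin X (V i) \<and> V i \<noteq> {}"
  define U' where "U' i = (if i < k then U i else U 0)" for i
  define V' where "V' i = (if i < k then V i else V 0)" for i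
  have "\<forall>i<m. openin X (U' i) \<and> U' i \<noteq> {} \<and> openin X (V' i) \<and> V' i \<noteq> {}"
    using UV \<open>0 < k\<close> by (simp add: U'_def V'_def)
  then obtain n where n: "n \<ge> 1" "\<forall>i<m. comp_seq g n ` U' i \<inter> V' i \<noteq> {}"
    using wm unfolding weakly_mixing_order_def by blast
  moreover have "\<forall>i<k. comp_seq g n ` U i \<inter> V i \<noteq> {}"
  proof (intro allI impI)
    fix i assume "i < k"
    then show "comp_seq g n ` U i \<inter> V i \<noteq> {}"
      using n(2)[rule_format, of i] \<open>k \<le> m\<close> by (simp add: U'_def V'_def)
  qed
  ultimately show "\<exists>n\<ge>1. \<forall>i<k. comp_seq g n ` U i \<inter> V i \<noteq> {}"
    by blast
qed

lemma weakly_mixing_orderD: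
  assumes "weakly_mixing_order m X g"
    and "\<And>i. i < m \<Longrightarrow> openin X (U i) \<and> U i \<noteq> {} \<and> openin X (V i) \<and> V i \<noteq> {}"
  shows "\<exists>n\<ge>1. \<forall>i<m. comp_seq g n ` U i \<inter> V i \<noteq> {}"
  using assms unfolding weakly_mixing_order_def by blast

lemma comp_seq_factor: "n \<le> m \<Longrightarrow> \<exists>H. comp_seq g m = H \<circ> comp_seq g n"
proof (induction m rule: dec_induct)
  case base
  show ?case by (auto intro: exI[of _ id])
next
  case (step m)
  then obtain H where "comp_seq g m = H \<circ> comp_seq g n" by blast
  then show ?case by (auto intro: exI[of _ "g (Suc m) \<circ> H"])
qed

lemma comp_seq_image_subset_later:
  "n \<le> m \<Longrightarrow> comp_seq g n ` K \<subseteq> comp_seq g n ` J \<Longrightarrow> comp_seq g m ` K \<subseteq> comp_seq g m ` J"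
  using comp_seq_factor[of n m g] by (auto simp: image_comp[symmetric] image_mono)

locale interval_system =
  fixes f :: "nat \<Rightarrow> real \<Rightarrow> real"
  assumes continuous_f: "\<And>n. n \<ge> 1 \<Longrightarrow> continuous_on {0..1} (f n)"
    and f_into: "\<And>n. n \<ge> 1 \<Longrightarrow> f n ` {0..1} \<subseteq> {0..1}"
begin

lemma comp_seq_continuous_self_map:
  "continuous_on {0..1} (comp_seq f n) \<and> comp_seq f n ` {0..1} \<subseteq> {0..1}"
proof (induction n)
  case 0
  show ?case by simp
next
  case (Suc n)
  have "continuous_on {0..1} (f (Suc n))" "f (Suc n) ` {0..1} \<subseteq> {0..1}"
    using continuous_f f_into by auto
  with Suc show ?case
    by (auto intro: continuous_on_compose2 simp: image_subset_iff)
qed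

lemma continuous_on_comp_seq: "continuous_on {0..1} (comp_seq f n)"
  using comp_seq_continuous_self_map by blast

lemma comp_seq_image_subset: "comp_seq f n ` {0..1} \<subseteq> {0..1}"
  using comp_seq_continuous_self_map by blast

lemma comp_seq_maps_small_ball_I:
  assumes "z \<in> {0..1}" "open T" "comp_seq f n z \<in> T"
  obtains \<epsilon> where "0 < \<epsilon>" "comp_seq f n ` ball_I z \<epsilon> \<subseteq> T"
proof -
  obtain e where "0 < e" "ball (comp_seq f n z) e \<subseteq> T"
    using assms(2,3) open_contains_ball by blast
  moreover obtain \<epsilon> where "0 < \<epsilon>"
    "\<forall>y\<in>{0..1}. dist y z < \<epsilon> \<longrightarrow> dist (comp_seq f n y) (comp_seq f n z) < e"
    using continuous_on_comp_seq assms(1) \<open>0 < e\<close> unfolding continuous_on_iff by blast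
  ultimately show thesis
    by (intro that[of \<epsilon>]) (auto simp: ball_I_def dist_real_def abs_minus_commute)
qed

lemma image_ball_I_contains_Icc:
  assumes "p \<in> ball_I c r" "q \<in> ball_I c r"
  shows "{comp_seq f n p..comp_seq f n q} \<subseteq> comp_seq f n ` ball_I c r"
proof -
  have "connected (comp_seq f n ` ball_I c r)"
    using connected_ball_I ball_I_subset continuous_on_comp_seq
    by (metis connected_continuous_image continuous_on_subset)
  then show ?thesis
    using assms by (intro connected_contains_Icc) auto
qed

lemma ball_I_pair_disjoint_at:
  assumes "c \<in> {0..1}" "0 < r" "d \<in> {0..1}" "0 < s"
  obtains r' d' s' where "0 < r'" "d' \<in> {0..1}" "0 < s'"
    "ball_I c r' \<subseteq> ball_I c r" "ball_I d' s' \<subseteq> ball_I d s"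
    "comp_seq f k ` ball_I c r' \<inter> ball_I d' s' = {}"
proof -
  define z where "z = comp_seq f k c"
  obtain y where y: "y \<in> ball_I d s" "y \<noteq> z"
    using ball_I_other_point[OF assms(3,4)] by blast
  define t where "t = \<bar>y - z\<bar>"
  have "0 < t"
    using y by (simp add: t_def)
  then have "comp_seq f k c \<in> ball z (t/2)"
    by (simp add: z_def)
  then obtain \<epsilon> where \<epsilon>: "0 < \<epsilon>" "comp_seq f k ` ball_I c \<epsilon> \<subseteq> ball z (t/2)"
    by (rule comp_seq_maps_small_ball_I[OF assms(1) open_ball])
  define r' where "r' = min \<epsilon> r"
  define s' where "s' = min (t/2) (s - \<bar>y - d\<bar>)"
  have "comp_seq f k ` ball_I c r' \<subseteq> ball z (t/2)"
    using \<epsilon>(2) by (auto simp: ball_I_def r'_def)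
  moreover have "ball_I y s' \<subseteq> ball y (t/2)"
    by (auto simp: ball_I_def s'_def dist_real_def abs_minus_commute)
  moreover have "ball z (t/2) \<inter> ball y (t/2) = {}"
    using abs_minus_commute[of y z] by (intro disjoint_ballI) (simp add: t_def dist_real_def)
  ultimately have "comp_seq f k ` ball_I c r' \<inter> ball_I y s' = {}"
    by blast
  moreover have "0 < r'" "0 < s'" "y \<in> {0..1}"
    using \<epsilon>(1) assms(2) \<open>0 < t\<close> y(1) by (auto simp: r'_def s'_def ball_I_def)
  moreover have "ball_I c r' \<subseteq> ball_I c r" "ball_I y s' \<subseteq> ball_I d s"
    using y(1) ball_I_subset_ball_I by (auto simp: ball_I_def r'_def s'_def)
  ultimately show thesis
    using that by blast
qed

lemma ball_I_pair_avoiding_early_times: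
  assumes "c \<in> {0..1}" "0 < r" "d \<in> {0..1}" "0 < s"
  shows "\<exists>c' r' d' s'. c' \<in> {0..1} \<and> 0 < r' \<and> d' \<in> {0..1} \<and> 0 < s' \<and>
     ball_I c' r' \<subseteq> ball_I c r \<and> ball_I d' s' \<subseteq> ball_I d s \<and>
     (\<forall>n<n0. comp_seq f n ` ball_I c' r' \<inter> ball_I d' s' = {})"
proof (induction n0)
  case 0
  then show ?case using assms by blast
next
  case (Suc n0)
  then obtain c' r' d' s' where IH: "c' \<in> {0..1}" "0 < r'" "d' \<in> {0..1}" "0 < s'"
     "ball_I c' r' \<subseteq> ball_I c r" "ball_I d' s' \<subseteq> ball_I d s"
     "\<forall>n<n0. comp_seq f n ` ball_I c' r' \<inter> ball_I d' s' = {}" by blast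
  obtain r'' d'' s'' where new: "0 < r''" "d'' \<in> {0..1}" "0 < s''"
    "ball_I c' r'' \<subseteq> ball_I c' r'" "ball_I d'' s'' \<subseteq> ball_I d' s'"
    "comp_seq f n0 ` ball_I c' r'' \<inter> ball_I d'' s'' = {}"
    using ball_I_pair_disjoint_at[OF IH(1-4), of n0] by blast
  have "\<forall>n<Suc n0. comp_seq f n ` ball_I c' r'' \<inter> ball_I d'' s'' = {}"
    using IH(7) new(4-6) by (auto simp: less_Suc_eq)
  moreover have "ball_I c' r'' \<subseteq> ball_I c r" "ball_I d'' s'' \<subseteq> ball_I d s"
    using new(4,5) IH(5,6) by blast+
  ultimately show ?case
    using IH(1) new(1-3) by (intro exI[of _ c'] exI[of _ r''] exI[of _ d''] exI[of _ s'']) simp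
qed

text \<open>Shrinking the first pair to balls that cannot meet before time \<open>n\<^sub>0\<close> forces a late mixing time.\<close>

lemma weakly_mixing_late:
  assumes wm: "weakly_mixing_order m (top_of_set {0..1}) f" and "0 < m"
    and UV: "\<forall>i<m. openin (top_of_set {0..1}) (U i) \<and> U i \<noteq> {} \<and>
                   openin (top_of_set {0..1}) (V i) \<and> V i \<noteq> {}"
  shows "\<exists>n\<ge>n0. \<forall>i<m. comp_seq f n ` U i \<inter> V i \<noteq> {}"
proof -
  have U0: "openin (top_of_set {0..1}) (U 0)" "U 0 \<noteq> {}"
    and V0: "openin (top_of_set {0..1}) (V 0)" "V 0 \<noteq> {}"
    using UV \<open>0 < m\<close> by blast+
  obtain c d where cd: "c \<in> U 0" "d \<in> V 0"
    using U0(2) V0(2) by blast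
  obtain r where r: "0 < r" "ball_I c r \<subseteq> U 0"
    using openin_contains_ball_I[OF U0(1) cd(1)] by blast
  obtain s where s: "0 < s" "ball_I d s \<subseteq> V 0"
    using openin_contains_ball_I[OF V0(1) cd(2)] by blast
  have cI: "c \<in> {0..1}" and dI: "d \<in> {0..1}"
    using cd openin_imp_subset[OF U0(1)] openin_imp_subset[OF V0(1)] by blast+
  obtain c' r' d' s' where h: "c' \<in> {0..1}" "0 < r'" "d' \<in> {0..1}" "0 < s'"
     "ball_I c' r' \<subseteq> ball_I c r" "ball_I d' s' \<subseteq> ball_I d s"
     "\<forall>n<n0. comp_seq f n ` ball_I c' r' \<inter> ball_I d' s' = {}"
    using ball_I_pair_avoiding_early_times[OF cI r(1) dI s(1), of n0] by blast
  define U' where "U' = U(0 := ball_I c' r')"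
  define V' where "V' = V(0 := ball_I d' s')"
  have "\<forall>i<m. openin (top_of_set {0..1}) (U' i) \<and> U' i \<noteq> {} \<and>
              openin (top_of_set {0..1}) (V' i) \<and> V' i \<noteq> {}"
    using UV centre_in_ball_I[OF h(1,2)] centre_in_ball_I[OF h(3,4)]
    by (auto simp: U'_def V'_def openin_ball_I)
  then obtain n where n: "\<forall>i<m. comp_seq f n ` U' i \<inter> V' i \<noteq> {}"
    using wm unfolding weakly_mixing_order_def by blast
  have "n \<ge> n0"
  proof (rule ccontr)
    assume "\<not> n \<ge> n0"
    then show False
      using n[rule_format, OF \<open>0 < m\<close>] h(7) by (simp add: U'_def V'_def)
  qed
  moreover have "comp_seq f n ` U' i \<inter> V' i \<subseteq> comp_seq f n ` U i \<inter> V i" for i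
    using r s h by (auto simp: U'_def V'_def)
  ultimately show ?thesis
    using n by (metis subset_empty)
qed

end

locale wm3_interval_system = interval_system +
  assumes wm3: "weakly_mixing_order 3 (top_of_set {0..1}) f"
begin

lemma late_image_covers_middle:
  assumes "x \<in> {0..1}" "0 < s" "0 < e" "e < 1/2"
  shows "\<exists>m\<ge>n0. {e..1-e} \<subseteq> comp_seq f m ` ball_I x s"
proof -
  have wm2: "weakly_mixing_order 2 (top_of_set {0..1}) f"
    using weakly_mixing_order_mono[OF wm3] by simp
  have "\<exists>m\<ge>n0. \<forall>i<2. comp_seq f m ` ([ball_I x s, ball_I x s] ! i) \<inter> ([ball_I 0 e, ball_I 1 e] ! i) \<noteq> {}"
    using assms
    by (intro weakly_mixing_late[OF wm2])
       (auto simp: numeral_2_eq_2 less_Suc_eq openin_ball_I ball_I_nonempty)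
  then obtain m p q where m: "m \<ge> n0" "p \<in> ball_I x s" "comp_seq f m p \<in> ball_I 0 e"
    "q \<in> ball_I x s" "comp_seq f m q \<in> ball_I 1 e"
    by (auto simp: numeral_2_eq_2 less_Suc_eq all_conj_distrib)
  have "{comp_seq f m p..comp_seq f m q} \<subseteq> comp_seq f m ` ball_I x s"
    using image_ball_I_contains_Icc m(2,4) .
  moreover have "comp_seq f m p \<le> e" "1 - e \<le> comp_seq f m q"
    using m by (auto simp: ball_I_def)
  ultimately show ?thesis
    using m(1) by (intro exI[of _ m]) auto
qed

lemma late_image_contains_image_of_subball:
  assumes "c \<in> {0..1}" "0 < r" "x \<in> {0..1}" "0 < s"
  shows "\<exists>n\<ge>n0. \<exists>x' s'. x' \<in> {0..1} \<and> 0 < s' \<and> ball_I x' s' \<subseteq> ball_I x s \<and>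
     comp_seq f n ` ball_I x' s' \<subseteq> comp_seq f n ` ball_I c r"
proof -
  have "\<exists>n\<ge>n0. \<forall>i<3. comp_seq f n ` ([ball_I c r, ball_I c r, ball_I x s] ! i)
      \<inter> ([ball_I 0 (1/4), ball_I 1 (1/4), ball_I (1/2) (1/4)] ! i) \<noteq> {}"
    using assms
    by (intro weakly_mixing_late[OF wm3])
       (auto simp: numeral_3_eq_3 less_Suc_eq openin_ball_I ball_I_nonempty)
  then obtain n p q z where n: "n \<ge> n0"
    and pq: "p \<in> ball_I c r" "comp_seq f n p \<in> ball_I 0 (1/4)"
            "q \<in> ball_I c r" "comp_seq f n q \<in> ball_I 1 (1/4)"
    and z: "z \<in> ball_I x s" "comp_seq f n z \<in> ball_I (1/2) (1/4)"
    by (auto simp: numeral_3_eq_3 less_Suc_eq all_conj_distrib)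
  have "{comp_seq f n p..comp_seq f n q} \<subseteq> comp_seq f n ` ball_I c r"
    using image_ball_I_contains_Icc pq(1,3) .
  moreover have "comp_seq f n p \<le> 1/4" "3/4 \<le> comp_seq f n q"
    using pq by (auto simp: ball_I_def)
  ultimately have cover: "{1/4<..<3/4} \<subseteq> comp_seq f n ` ball_I c r"
    by auto
  have zI: "z \<in> {0..1}" and "\<bar>comp_seq f n z - 1/2\<bar> < 1/4"
    using z unfolding ball_I_def by blast+
  then have "comp_seq f n z \<in> {1/4<..<3/4}"
    unfolding abs_less_iff greaterThanLessThan_iff by linarith
  then obtain \<epsilon> where \<epsilon>: "0 < \<epsilon>" "comp_seq f n ` ball_I z \<epsilon> \<subseteq> {1/4<..<3/4}"
    using comp_seq_maps_small_ball_I[OF zI open_greaterThanLessThan] by blast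
  define s' where "s' = min \<epsilon> (s - \<bar>z - x\<bar>)"
  have "0 < s'" "ball_I z s' \<subseteq> ball_I x s"
    using \<epsilon>(1) z(1) ball_I_subset_ball_I by (auto simp: s'_def ball_I_def)
  moreover have "comp_seq f n ` ball_I z s' \<subseteq> comp_seq f n ` ball_I c r"
    using \<epsilon>(2) cover by (force simp: s'_def ball_I_def)
  ultimately show ?thesis
    using zI n by blast
qed

lemma late_common_subimage:
  assumes "finite A" "A \<subseteq> {0..1}" "0 < r"
  shows "\<exists>n\<ge>n0. \<exists>x s. x \<in> {0..1} \<and> 0 < s \<and>
     (\<forall>a\<in>A. comp_seq f n ` ball_I x s \<subseteq> comp_seq f n ` ball_I a r)"
  using assms(1,2)
proof (induction A arbitrary: n0 rule: finite_induct)
  case empty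
  have "(0::real) \<in> {0..1}" "(0::real) < 1" by simp_all
  then show ?case using order.refl by blast
next
  case (insert a A)
  obtain n1 x1 s1 where IH: "n1 \<ge> n0" "x1 \<in> {0..1}" "0 < s1"
    "\<forall>b\<in>A. comp_seq f n1 ` ball_I x1 s1 \<subseteq> comp_seq f n1 ` ball_I b r"
    using insert.IH[of n0] insert.prems by auto
  obtain n x s where n: "n \<ge> n1" "x \<in> {0..1}" "0 < s" "ball_I x s \<subseteq> ball_I x1 s1"
    "comp_seq f n ` ball_I x s \<subseteq> comp_seq f n ` ball_I a r"
    using late_image_contains_image_of_subball[of a r x1 s1 n1] insert.prems assms(3) IH(2,3)
    by auto
  have "comp_seq f n ` ball_I x s \<subseteq> comp_seq f n ` ball_I b r" if "b \<in> A" for b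
    using comp_seq_image_subset_later[OF n(1) IH(4)[rule_format, OF that]] n(4) by blast
  with n(5) have "\<forall>b\<in>insert a A. comp_seq f n ` ball_I x s \<subseteq> comp_seq f n ` ball_I b r"
    by blast
  moreover have "n \<ge> n0"
    using n(1) IH(1) by linarith
  ultimately show ?case
    using n(2,3) by blast
qed

lemma approximate_transitions:
  assumes "finite P" "P \<subseteq> {0..1} \<times> {0..1}" "0 < \<delta>"
  shows "\<exists>n\<ge>1. \<forall>(a, b)\<in>P. \<exists>y\<in>{0..1}. \<bar>y - a\<bar> < \<delta> \<and> \<bar>comp_seq f n y - b\<bar> < \<delta>"
proof -
  have "finite (fst ` P)" "fst ` P \<subseteq> {0..1}"
    using assms(1,2) by auto
  then obtain n1 x s where x: "n1 \<ge> 1" "x \<in> {0..1}" "0 < s"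
    "\<forall>a\<in>fst ` P. comp_seq f n1 ` ball_I x s \<subseteq> comp_seq f n1 ` ball_I a \<delta>"
    using late_common_subimage[OF _ _ assms(3), of "fst ` P" 1] by blast
  define e where "e = min (\<delta>/2) (1/4)"
  have e: "0 < e" "e < 1/2" "e < \<delta>"
    using assms(3) by (auto simp: e_def)
  obtain n where n: "n \<ge> n1" "{e..1-e} \<subseteq> comp_seq f n ` ball_I x s"
    using late_image_covers_middle[OF x(2,3) e(1,2)] by blast
  have "\<exists>y\<in>{0..1}. \<bar>y - a\<bar> < \<delta> \<and> \<bar>comp_seq f n y - b\<bar> < \<delta>" if ab: "(a, b) \<in> P" for a b
  proof -
    have "a \<in> fst ` P"
      using ab by force
    then have "comp_seq f n1 ` ball_I x s \<subseteq> comp_seq f n1 ` ball_I a \<delta>"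
      using x(4) by blast
    then have "comp_seq f n ` ball_I x s \<subseteq> comp_seq f n ` ball_I a \<delta>"
      by (rule comp_seq_image_subset_later[OF n(1)])
    moreover have "max e (min (1-e) b) \<in> {e..1-e}"
      using e by auto
    ultimately have "max e (min (1-e) b) \<in> comp_seq f n ` ball_I a \<delta>"
      using n(2) by blast
    then obtain y where y: "y \<in> ball_I a \<delta>" "max e (min (1-e) b) = comp_seq f n y"
      by blast
    have "b \<in> {0..1}"
      using ab assms(2) by auto
    then have "\<bar>comp_seq f n y - b\<bar> < \<delta>"
      using y(2) e by auto
    with y(1) show ?thesis
      unfolding ball_I_def by blast
  qed
  moreover have "n \<ge> 1"
    using n(1) x(1) by linarith
  ultimately show ?thesis
    by blast
qed

end

section \<open>Borel probability measures on the unit interval\<close>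

lemma space_borel_I: "space borel_I = {0..1}"
  by (simp add: borel_I_def space_restrict_space)

lemma measurable_borel_I_iff:
  "h \<in> measurable M borel_I \<longleftrightarrow> h \<in> borel_measurable M \<and> h \<in> space M \<rightarrow> {0..1}"
  by (simp add: borel_I_def measurable_restrict_space2_iff)

lemma borel_measurable_continuous_on_I:
  "continuous_on {0..1} g \<Longrightarrow> g \<in> borel_measurable borel_I"
  unfolding borel_I_def by (rule borel_measurable_continuous_on_restrict)

lemma measurable_self_map_I:
  "continuous_on {0..1} h \<Longrightarrow> h ` {0..1} \<subseteq> {0..1} \<Longrightarrow> h \<in> measurable borel_I borel_I"
  by (auto simp: measurable_borel_I_iff space_borel_I borel_measurable_continuous_on_I)

lemma prob_measures_I_D:
  assumes "\<mu> \<in> prob_measures_I"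
  shows "prob_space \<mu>" "sets \<mu> = sets borel_I" "space \<mu> = {0..1}"
  using assms space_borel_I by (auto simp: prob_measures_I_def dest: sets_eq_imp_space_eq)

lemma measurable_prob_measures_I:
  "\<mu> \<in> prob_measures_I \<Longrightarrow> measurable \<mu> N = measurable borel_I N"
  using prob_measures_I_D(2) by (rule measurable_cong_sets) auto

lemma measurable_pair_prob_measures_I:
  "\<mu> \<in> prob_measures_I \<Longrightarrow> \<nu> \<in> prob_measures_I \<Longrightarrow>
    measurable (\<mu> \<Otimes>\<^sub>M \<nu>) N = measurable (borel_I \<Otimes>\<^sub>M borel_I) N"
  using prob_measures_I_D(2) by (intro measurable_cong_sets sets_pair_measure_cong) auto

lemma distr_in_prob_measures_I:
  "prob_space M \<Longrightarrow> h \<in> measurable M borel_I \<Longrightarrow> distr M borel_I h \<in> prob_measures_I"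
  by (simp add: prob_measures_I_def prob_space.prob_space_distr)

lemma return_in_prob_measures_I: "x \<in> {0..1} \<Longrightarrow> return borel_I x \<in> prob_measures_I"
  by (simp add: prob_measures_I_def prob_space_return space_borel_I)

lemma integral_return_I:
  fixes g :: "real \<Rightarrow> real"
  shows "x \<in> {0..1} \<Longrightarrow> continuous_on {0..1} g \<Longrightarrow> (\<integral>t. g t \<partial>return borel_I x) = g x"
  by (rule integral_return) (auto simp: space_borel_I borel_measurable_continuous_on_I)

lemma integrable_continuous_on_I:
  fixes g :: "real \<Rightarrow> real"
  assumes "\<mu> \<in> prob_measures_I" "continuous_on {0..1} g"
  shows "integrable \<mu> g"
proof -
  interpret prob_space \<mu>
    using prob_measures_I_D(1)[OF assms(1)] .
  obtain B where "\<forall>x\<in>{0..1}. \<bar>g x\<bar> \<le> B"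
    using compact_continuous_image[OF assms(2)] compact_imp_bounded bounded_real by force
  then show ?thesis
    using prob_measures_I_D(3)[OF assms(1)] measurable_prob_measures_I[OF assms(1)]
      borel_measurable_continuous_on_I[OF assms(2)]
    by (intro integrable_const_bound[of _ B]) auto
qed

lemma (in prob_space) abs_integral_diff_le:
  fixes a b :: "'a \<Rightarrow> real"
  assumes "integrable M a" "integrable M b" "\<forall>x\<in>space M. \<bar>a x - b x\<bar> \<le> c"
  shows "\<bar>(\<integral>x. a x \<partial>M) - (\<integral>x. b x \<partial>M)\<bar> \<le> c"
proof -
  have "(\<integral>x. a x \<partial>M) - (\<integral>x. b x \<partial>M) = (\<integral>x. a x - b x \<partial>M)"
    using assms(1,2) by simp
  also have "\<dots> \<le> c"
    using assms by (intro integral_le_const AE_I2) (auto simp: abs_le_iff)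
  finally have "(\<integral>x. a x \<partial>M) - (\<integral>x. b x \<partial>M) \<le> c" .
  moreover have "(\<integral>x. b x \<partial>M) - (\<integral>x. a x \<partial>M) = (\<integral>x. b x - a x \<partial>M)"
    using assms(1,2) by simp
  moreover have "\<dots> \<le> c"
    using assms by (intro integral_le_const AE_I2) (auto simp: abs_le_iff)
  ultimately show ?thesis
    by linarith
qed

lemma abs_integral_distr_diff_le:
  fixes g :: "real \<Rightarrow> real"
  assumes "prob_space M" "a \<in> measurable M borel_I" "b \<in> measurable M borel_I"
    and "continuous_on {0..1} g" "\<forall>z\<in>space M. \<bar>g (a z) - g (b z)\<bar> \<le> c"
  shows "\<bar>(\<integral>x. g x \<partial>distr M borel_I a) - (\<integral>x. g x \<partial>distr M borel_I b)\<bar> \<le> c"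
proof -
  have g: "g \<in> borel_measurable borel_I"
    by (rule borel_measurable_continuous_on_I[OF assms(4)])
  have "integrable (distr M borel_I a) g" "integrable (distr M borel_I b) g"
    using assms by (auto intro: integrable_continuous_on_I distr_in_prob_measures_I)
  then have "integrable M (\<lambda>z. g (a z))" "integrable M (\<lambda>z. g (b z))"
    using integrable_distr_eq[OF assms(2) g] integrable_distr_eq[OF assms(3) g] by auto
  then show ?thesis
    using prob_space.abs_integral_diff_le[OF assms(1)] assms(5)
    by (simp add: integral_distr[OF assms(2) g] integral_distr[OF assms(3) g])
qed

lemma distr_pair_snd_prob_space:
  assumes "prob_space \<mu>" "prob_space \<nu>"
  shows "distr (\<mu> \<Otimes>\<^sub>M \<nu>) \<nu> snd = \<nu>"
proof -
  interpret pair_prob_space \<mu> \<nu>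
    using assms by (simp add: pair_prob_space_def pair_sigma_finite_def prob_space_imp_sigma_finite)
  have "distr (\<mu> \<Otimes>\<^sub>M \<nu>) \<nu> snd = distr (distr (\<nu> \<Otimes>\<^sub>M \<mu>) (\<mu> \<Otimes>\<^sub>M \<nu>) (\<lambda>(x, y). (y, x))) \<nu> snd"
    by (simp add: distr_pair_swap[symmetric])
  also have "\<dots> = distr (\<nu> \<Otimes>\<^sub>M \<mu>) \<nu> fst"
    by (subst distr_distr) (auto intro!: distr_cong simp: space_pair_measure)
  also have "\<dots> = \<nu>"
    by (rule prob_space.distr_pair_fst[OF assms(1)])
  finally show ?thesis .
qed

lemma distr_pair_prob_measures_I:
  assumes "\<mu> \<in> prob_measures_I" "\<nu> \<in> prob_measures_I"
  shows "distr (\<mu> \<Otimes>\<^sub>M \<nu>) borel_I fst = \<mu>" "distr (\<mu> \<Otimes>\<^sub>M \<nu>) borel_I snd = \<nu>"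
proof -
  note D = prob_measures_I_D[OF assms(1)] prob_measures_I_D[OF assms(2)]
  have "distr (\<mu> \<Otimes>\<^sub>M \<nu>) borel_I fst = distr (\<mu> \<Otimes>\<^sub>M \<nu>) \<mu> fst"
    using D by (intro distr_cong) auto
  then show "distr (\<mu> \<Otimes>\<^sub>M \<nu>) borel_I fst = \<mu>"
    using prob_space.distr_pair_fst[OF D(4)] by simp
  have "distr (\<mu> \<Otimes>\<^sub>M \<nu>) borel_I snd = distr (\<mu> \<Otimes>\<^sub>M \<nu>) \<nu> snd"
    using D by (intro distr_cong) auto
  then show "distr (\<mu> \<Otimes>\<^sub>M \<nu>) borel_I snd = \<nu>"
    using distr_pair_snd_prob_space[OF D(1,4)] by simp
qed

definition weak_star_ball :: "real measure \<Rightarrow> (real \<Rightarrow> real) set \<Rightarrow> real \<Rightarrow> real measure set" where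
  "weak_star_ball \<mu> G e =
     {\<nu> \<in> prob_measures_I. \<forall>g\<in>G. \<bar>(\<integral>x. g x \<partial>\<nu>) - (\<integral>x. g x \<partial>\<mu>)\<bar> < e}"

lemma openin_weak_star_basic:
  fixes g :: "real \<Rightarrow> real"
  assumes "continuous_on {0..1} g" "open W"
  shows "openin weak_star_topology_I {\<mu> \<in> prob_measures_I. (\<integral>t. g t \<partial>\<mu>) \<in> W}"
  unfolding weak_star_topology_I_def using assms by (intro topology_generated_by_Basis) blast

lemma openin_weak_star_subset: "openin weak_star_topology_I S \<Longrightarrow> S \<subseteq> prob_measures_I"
  using openin_subset[of weak_star_topology_I S] by (auto simp: weak_star_topology_I_def)

definition weak_star_nhd :: "real measure set \<Rightarrow> real measure \<Rightarrow> bool" where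
  "weak_star_nhd S \<mu> \<longleftrightarrow>
     (\<exists>G e. finite G \<and> 0 < e \<and> (\<forall>g\<in>G. continuous_on {0..1} g) \<and> weak_star_ball \<mu> G e \<subseteq> S)"

lemma weak_star_nhd_mono: "weak_star_nhd S \<mu> \<Longrightarrow> S \<subseteq> T \<Longrightarrow> weak_star_nhd T \<mu>"
  unfolding weak_star_nhd_def by (meson order_trans)

lemma weak_star_nhd_Int:
  assumes "weak_star_nhd A \<mu>" "weak_star_nhd B \<mu>"
  shows "weak_star_nhd (A \<inter> B) \<mu>"
proof -
  obtain G1 e1 G2 e2 where "finite G1" "0 < e1" "\<forall>g\<in>G1. continuous_on {0..1} g"
    "weak_star_ball \<mu> G1 e1 \<subseteq> A" "finite G2" "0 < e2" "\<forall>g\<in>G2. continuous_on {0..1} g"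
    "weak_star_ball \<mu> G2 e2 \<subseteq> B"
    using assms unfolding weak_star_nhd_def by blast
  moreover have "weak_star_ball \<mu> (G1 \<union> G2) (min e1 e2) \<subseteq>
      weak_star_ball \<mu> G1 e1 \<inter> weak_star_ball \<mu> G2 e2"
    by (auto simp: weak_star_ball_def)
  ultimately show ?thesis
    unfolding weak_star_nhd_def by (intro exI[of _ "G1 \<union> G2"] exI[of _ "min e1 e2"]) auto
qed

lemma weak_star_nhd_basic:
  fixes g :: "real \<Rightarrow> real"
  assumes "continuous_on {0..1} g" "open W" "(\<integral>x. g x \<partial>\<mu>) \<in> W"
  shows "weak_star_nhd {\<nu> \<in> prob_measures_I. (\<integral>x. g x \<partial>\<nu>) \<in> W} \<mu>"
proof -
  obtain e where "0 < e" "ball (\<integral>x. g x \<partial>\<mu>) e \<subseteq> W"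
    using assms(2,3) open_contains_ball by blast
  then have "weak_star_ball \<mu> {g} e \<subseteq> {\<nu> \<in> prob_measures_I. (\<integral>x. g x \<partial>\<nu>) \<in> W}"
    by (auto simp: weak_star_ball_def dist_real_def abs_minus_commute)
  then show ?thesis
    unfolding weak_star_nhd_def using \<open>0 < e\<close> assms(1)
    by (intro exI[of _ "{g}"] exI[of _ e]) auto
qed

lemma openin_weak_star_imp_nhd:
  assumes "openin weak_star_topology_I S" "\<mu> \<in> S"
  shows "weak_star_nhd S \<mu>"
proof -
  have "generate_topology_on {{\<mu> \<in> prob_measures_I. (\<integral>x. g x \<partial>\<mu>) \<in> W} | (g :: real \<Rightarrow> real) W.
        continuous_on {0..1} g \<and> open W} S"
    using assms(1) unfolding weak_star_topology_I_def openin_topology_generated_by_iff .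
  then have "\<forall>\<mu>\<in>S. weak_star_nhd S \<mu>"
  proof (induction rule: generate_topology_on.induct)
    case Empty
    show ?case by simp
  next
    case (Int A B)
    then show ?case by (simp add: weak_star_nhd_Int)
  next
    case (UN K)
    then show ?case by (meson UnionE Union_upper weak_star_nhd_mono)
  next
    case (Basis s)
    then show ?case by (auto intro: weak_star_nhd_basic)
  qed
  then show ?thesis
    using assms(2) by blast
qed

lemma uniformly_equicontinuous_finite:
  fixes G :: "('a::metric_space \<Rightarrow> 'b::metric_space) set"
  assumes "compact S" "finite G" "\<forall>g\<in>G. continuous_on S g" "0 < e"
  shows "\<exists>d>0. \<forall>g\<in>G. \<forall>x\<in>S. \<forall>y\<in>S. dist y x < d \<longrightarrow> dist (g y) (g x) < e"
  using assms(2,3)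
proof (induction G rule: finite_induct)
  case empty
  show ?case by (auto intro: exI[of _ 1])
next
  case (insert g G)
  then obtain d1 where "0 < d1" "\<forall>g\<in>G. \<forall>x\<in>S. \<forall>y\<in>S. dist y x < d1 \<longrightarrow> dist (g y) (g x) < e"
    by auto
  moreover obtain d2 where "0 < d2" "\<forall>x\<in>S. \<forall>y\<in>S. dist y x < d2 \<longrightarrow> dist (g y) (g x) < e"
    using compact_uniformly_continuous[OF _ assms(1)] insert.prems assms(4)
    unfolding uniformly_continuous_on_def by (metis insertCI)
  ultimately show ?case
    by (intro exI[of _ "min d1 d2"]) auto
qed

lemma eventually_distr_in_weak_star_open:
  assumes "openin weak_star_topology_I S" "\<mu> \<in> S"
  shows "\<forall>\<^sub>F \<delta> in at_right 0. \<forall>(M :: 'a measure) a b. prob_space M \<longrightarrow>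
    a \<in> measurable M borel_I \<longrightarrow> b \<in> measurable M borel_I \<longrightarrow> distr M borel_I b = \<mu> \<longrightarrow>
    (\<forall>z\<in>space M. \<bar>a z - b z\<bar> < \<delta>) \<longrightarrow> distr M borel_I a \<in> S"
proof -
  obtain G e where G: "finite G" "0 < e" "\<forall>g\<in>G. continuous_on {0..1} g" "weak_star_ball \<mu> G e \<subseteq> S"
    using openin_weak_star_imp_nhd[OF assms] unfolding weak_star_nhd_def by blast
  obtain d where d: "0 < d" "\<forall>g\<in>G. \<forall>x\<in>{0..1}. \<forall>y\<in>{0..1}. dist y x < d \<longrightarrow> dist (g y) (g x) < e/2"
    using uniformly_equicontinuous_finite[of "{0..1}" G "e/2"] G by auto
  show ?thesis
    unfolding eventually_at_right_field
  proof (intro exI[of _ d] conjI allI impI)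
    fix \<delta> :: real and M :: "'a measure" and a b :: "'a \<Rightarrow> real"
    assume "\<delta> < d" and M: "prob_space M" and a: "a \<in> measurable M borel_I"
      and b: "b \<in> measurable M borel_I" and "distr M borel_I b = \<mu>"
      and close: "\<forall>z\<in>space M. \<bar>a z - b z\<bar> < \<delta>"
    have "\<bar>(\<integral>x. g x \<partial>distr M borel_I a) - (\<integral>x. g x \<partial>\<mu>)\<bar> < e" if "g \<in> G" for g
    proof -
      have "\<forall>z\<in>space M. \<bar>g (a z) - g (b z)\<bar> \<le> e/2"
      proof
        fix z assume z: "z \<in> space M"
        then have "a z \<in> {0..1}" "b z \<in> {0..1}"
          using measurable_space[OF a z] measurable_space[OF b z] by (simp_all add: space_borel_I)
        moreover have "dist (a z) (b z) < d"
          using close[rule_format, OF z] \<open>\<delta> < d\<close> by (simp add: dist_real_def)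
        ultimately show "\<bar>g (a z) - g (b z)\<bar> \<le> e/2"
          using d(2) that by (fastforce simp: dist_real_def)
      qed
      then show ?thesis
        using abs_integral_distr_diff_le[OF M a b] G(2,3) that \<open>distr M borel_I b = \<mu>\<close> by fastforce
    qed
    then have "distr M borel_I a \<in> weak_star_ball \<mu> G e"
      using distr_in_prob_measures_I[OF M a] by (simp add: weak_star_ball_def)
    then show "distr M borel_I a \<in> S"
      using G(4) by blast
  qed (use d in simp)
qed

text \<open>Pushing \<open>\<mu> \<otimes> \<nu>\<close> forward by a transport map gives a measure near \<open>\<mu>\<close> whose \<open>h\<close>-image is near \<open>\<nu>\<close>.\<close>

definition transport_map :: "real \<Rightarrow> (real \<Rightarrow> real) \<Rightarrow> (real \<times> real \<Rightarrow> real) \<Rightarrow> bool" where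
  "transport_map \<delta> h \<phi> \<longleftrightarrow> \<phi> \<in> measurable (borel_I \<Otimes>\<^sub>M borel_I) borel_I \<and>
     (\<forall>z\<in>{0..1} \<times> {0..1}. \<bar>\<phi> z - fst z\<bar> < \<delta> \<and> \<bar>h (\<phi> z) - snd z\<bar> < \<delta>)"

lemma eventually_transport_meets:
  assumes U: "openin weak_star_topology_I U" "U \<noteq> {}"
    and V: "openin weak_star_topology_I V" "V \<noteq> {}"
  shows "\<forall>\<^sub>F \<delta> in at_right 0. \<forall>h \<phi>. continuous_on {0..1} h \<longrightarrow> h ` {0..1} \<subseteq> {0..1} \<longrightarrow>
    transport_map \<delta> h \<phi> \<longrightarrow> (\<exists>\<rho>\<in>U. distr \<rho> borel_I h \<in> V)"
proof -
  obtain \<mu> \<nu> where "\<mu> \<in> U" "\<nu> \<in> V"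
    using U(2) V(2) by blast
  have PM: "\<mu> \<in> prob_measures_I" "\<nu> \<in> prob_measures_I"
    using \<open>\<mu> \<in> U\<close> \<open>\<nu> \<in> V\<close> openin_weak_star_subset U(1) V(1) by blast+
  define M where "M = \<mu> \<Otimes>\<^sub>M \<nu>"
  have M: "prob_space M" "space M = {0..1} \<times> {0..1}"
    using prob_measures_I_D[OF PM(1)] prob_measures_I_D[OF PM(2)]
    by (auto simp: M_def prob_space_pair space_pair_measure)
  have meas_M: "measurable M borel_I = measurable (borel_I \<Otimes>\<^sub>M borel_I) borel_I"
    unfolding M_def by (rule measurable_pair_prob_measures_I[OF PM])
  have fst_snd: "fst \<in> measurable M borel_I" "snd \<in> measurable M borel_I"
    unfolding meas_M by simp_all
  show ?thesis
    using eventually_conj[OF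
        eventually_distr_in_weak_star_open[where 'a = "real \<times> real", OF U(1) \<open>\<mu> \<in> U\<close>]
        eventually_distr_in_weak_star_open[where 'a = "real \<times> real", OF V(1) \<open>\<nu> \<in> V\<close>]]
  proof eventually_elim
    case (elim \<delta>)
    show ?case
    proof (intro allI impI)
      fix h \<phi>
      assume h: "continuous_on {0..1} h" "h ` {0..1} \<subseteq> {0..1}" and "transport_map \<delta> h \<phi>"
      then have \<phi>: "\<phi> \<in> measurable (borel_I \<Otimes>\<^sub>M borel_I) borel_I"
        and close: "\<forall>z\<in>{0..1} \<times> {0..1}. \<bar>\<phi> z - fst z\<bar> < \<delta> \<and> \<bar>h (\<phi> z) - snd z\<bar> < \<delta>"
        by (simp_all add: transport_map_def)
      have \<phi>M: "\<phi> \<in> measurable M borel_I"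
        using \<phi> meas_M by simp
      have h_meas: "h \<in> measurable borel_I borel_I"
        using measurable_self_map_I[OF h] .
      have "distr M borel_I \<phi> \<in> U"
        using elim[THEN conjunct1, rule_format, OF M(1) \<phi>M fst_snd(1)] close M(2)
          distr_pair_prob_measures_I[OF PM] by (auto simp: M_def)
      moreover have "distr (distr M borel_I \<phi>) borel_I h = distr M borel_I (h \<circ> \<phi>)"
        by (rule distr_distr[OF h_meas \<phi>M])
      moreover have "distr M borel_I (h \<circ> \<phi>) \<in> V"
        using elim[THEN conjunct2, rule_format, OF M(1) measurable_comp[OF \<phi>M h_meas] fst_snd(2)]
          close M(2) distr_pair_prob_measures_I[OF PM] by (auto simp: M_def)
      ultimately show "\<exists>\<rho>\<in>U. distr \<rho> borel_I h \<in> V"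
        by metis
    qed
  qed
qed

definition grid_floor :: "nat \<Rightarrow> real \<Rightarrow> real" where
  "grid_floor N x = \<lfloor>real N * x\<rfloor> / real N"

lemma grid_floor_in_I:
  assumes "0 < N" "x \<in> {0..1}"
  shows "grid_floor N x \<in> {0..1}"
proof -
  have "0 \<le> \<lfloor>real N * x\<rfloor>" "real_of_int \<lfloor>real N * x\<rfloor> \<le> real N"
    using assms floor_le_iff[of "real N * x"] by (auto intro: order_trans[OF of_int_floor_le] mult_left_le)
  then show ?thesis
    using assms by (simp add: grid_floor_def)
qed

lemma abs_grid_floor_diff_less:
  assumes "0 < N"
  shows "\<bar>grid_floor N x - x\<bar> < 1 / real N"
proof -
  have "x - grid_floor N x = (real N * x - \<lfloor>real N * x\<rfloor>) / real N"
    using assms by (simp add: grid_floor_def field_simps)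
  moreover have "0 \<le> real N * x - \<lfloor>real N * x\<rfloor>" "real N * x - \<lfloor>real N * x\<rfloor> < 1"
    by linarith+
  ultimately have "0 \<le> x - grid_floor N x" "x - grid_floor N x < 1 / real N"
    using assms by (simp_all add: divide_strict_right_mono)
  then show ?thesis
    by linarith
qed

lemma finite_grid_floor_image: "finite (grid_floor N ` {0..1})"
proof -
  have "grid_floor N ` {0..1} \<subseteq> (\<lambda>k. real_of_int k / real N) ` {0..int N}"
  proof
    fix y assume "y \<in> grid_floor N ` {0..1}"
    then obtain x where x: "x \<in> {0..1}" "y = grid_floor N x" by blast
    have "\<lfloor>real N * x\<rfloor> \<le> \<lfloor>real N * 1\<rfloor>"
      using x by (intro floor_mono mult_left_mono) auto
    then have "\<lfloor>real N * x\<rfloor> \<in> {0..int N}"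
      using x by simp
    then show "y \<in> (\<lambda>k. real_of_int k / real N) ` {0..int N}"
      using x by (auto simp: grid_floor_def)
  qed
  then show ?thesis
    by (rule finite_subset) simp
qed

lemma borel_measurable_floor_step:
  fixes a b :: "'a \<Rightarrow> real" and G :: "int \<Rightarrow> int \<Rightarrow> 'b::topological_space"
  assumes "a \<in> borel_measurable M" "b \<in> borel_measurable M"
  shows "(\<lambda>x. G \<lfloor>a x\<rfloor> \<lfloor>b x\<rfloor>) \<in> borel_measurable M"
proof -
  have floor: "(\<lambda>x. \<lfloor>c x\<rfloor>) \<in> measurable M (count_space UNIV)" if "c \<in> borel_measurable M"
    for c :: "'a \<Rightarrow> real"
    using measurable_compose[OF that measurable_real_floor] by simp
  have "(\<lambda>x. G k \<lfloor>b x\<rfloor>) \<in> borel_measurable M" for k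
    by (rule measurable_compose_countable[where f = "\<lambda>l x. G k l", OF _ floor[OF assms(2)]]) simp
  then show ?thesis
    by (rule measurable_compose_countable[where f = "\<lambda>k x. G k \<lfloor>b x\<rfloor>", OF _ floor[OF assms(1)]])
qed


lemma measurable_grid_step:
  assumes "0 < N" "\<forall>p \<in> grid_floor N ` {0..1} \<times> grid_floor N ` {0..1}. ch p \<in> {0..1}"
  shows "(\<lambda>z. ch (grid_floor N (fst z), grid_floor N (snd z))) \<in> measurable (borel_I \<Otimes>\<^sub>M borel_I) borel_I"
proof -
  have "(\<lambda>z. real N * fst z) \<in> borel_measurable (borel_I \<Otimes>\<^sub>M borel_I)"
    "(\<lambda>z. real N * snd z) \<in> borel_measurable (borel_I \<Otimes>\<^sub>M borel_I)"
    using borel_measurable_continuous_on_I[of "\<lambda>x. real N * x"]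
    by (auto intro!: measurable_compose[OF measurable_fst] measurable_compose[OF measurable_snd]
             continuous_intros)
  from borel_measurable_floor_step[OF this, of "\<lambda>k l. ch (k / N, l / N)"]
  have "(\<lambda>z. ch (grid_floor N (fst z), grid_floor N (snd z))) \<in> borel_measurable (borel_I \<Otimes>\<^sub>M borel_I)"
    unfolding grid_floor_def .
  moreover have "(\<lambda>z. ch (grid_floor N (fst z), grid_floor N (snd z))) \<in> space (borel_I \<Otimes>\<^sub>M borel_I) \<rightarrow> {0..1}"
    using assms by (auto simp: space_pair_measure space_borel_I)
  ultimately show ?thesis
    by (simp add: measurable_borel_I_iff)
qed

section \<open>Weak mixing of the induced system on measures\<close>

lemma (in interval_system) comp_seq_pushforward:
  assumes "\<mu> \<in> prob_measures_I"
  shows "comp_seq (\<lambda>n. pushforward_I (f n)) n \<mu> = distr \<mu> borel_I (comp_seq f n)"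
proof (induction n)
  case 0
  show ?case
    using prob_measures_I_D(2)[OF assms, symmetric] by (simp add: distr_id2 id_def)
next
  case (Suc n)
  have "f (Suc n) \<in> measurable borel_I borel_I"
    using continuous_f f_into by (intro measurable_self_map_I) auto
  moreover have "comp_seq f n \<in> measurable \<mu> borel_I"
    unfolding measurable_prob_measures_I[OF assms]
    by (intro measurable_self_map_I continuous_on_comp_seq comp_seq_image_subset)
  ultimately show ?case
    using Suc by (simp add: pushforward_I_def distr_distr comp_def)
qed

lemma (in wm3_interval_system) approximate_transport_map:
  assumes "0 < \<delta>"
  shows "\<exists>n\<ge>1. \<exists>\<phi>. transport_map \<delta> (comp_seq f n) \<phi>"
proof -
  obtain N :: nat where N: "0 < N" "1 / real N < \<delta>/2"
    using ex_inverse_of_nat_less[of "\<delta>/2"] assms by (auto simp: inverse_eq_divide)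
  define P where "P = grid_floor N ` {0..1} \<times> grid_floor N ` {0..1}"
  have grid: "(grid_floor N (fst z), grid_floor N (snd z)) \<in> P" if "z \<in> {0..1} \<times> {0..1}" for z
    using that by (auto simp: P_def)
  have "finite P" "P \<subseteq> {0..1} \<times> {0..1}"
    using finite_grid_floor_image grid_floor_in_I[OF N(1)] by (auto simp: P_def)
  then obtain n where n: "n \<ge> 1"
    "\<forall>(a, b)\<in>P. \<exists>y\<in>{0..1}. \<bar>y - a\<bar> < \<delta>/2 \<and> \<bar>comp_seq f n y - b\<bar> < \<delta>/2"
    using approximate_transitions assms by (meson half_gt_zero)
  then have "\<forall>p\<in>P. \<exists>y\<in>{0..1}. \<bar>y - fst p\<bar> < \<delta>/2 \<and> \<bar>comp_seq f n y - snd p\<bar> < \<delta>/2"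
    by (simp add: case_prod_beta)
  then obtain ch where ch: "\<forall>p\<in>P. ch p \<in> {0..1} \<and> \<bar>ch p - fst p\<bar> < \<delta>/2 \<and>
      \<bar>comp_seq f n (ch p) - snd p\<bar> < \<delta>/2"
    by (metis bchoice)
  define \<phi> where "\<phi> z = ch (grid_floor N (fst z), grid_floor N (snd z))" for z
  have "\<phi> \<in> measurable (borel_I \<Otimes>\<^sub>M borel_I) borel_I"
    unfolding \<phi>_def using ch by (intro measurable_grid_step N(1)) (simp add: P_def)
  moreover have "\<forall>z\<in>{0..1} \<times> {0..1}. \<bar>\<phi> z - fst z\<bar> < \<delta> \<and> \<bar>comp_seq f n (\<phi> z) - snd z\<bar> < \<delta>"
  proof
    fix z :: "real \<times> real" assume z: "z \<in> {0..1} \<times> {0..1}"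
    have "\<bar>grid_floor N (fst z) - fst z\<bar> < \<delta>/2" "\<bar>grid_floor N (snd z) - snd z\<bar> < \<delta>/2"
      using abs_grid_floor_diff_less[OF N(1), of "fst z"] abs_grid_floor_diff_less[OF N(1), of "snd z"] N(2)
      by linarith+
    moreover have "\<bar>\<phi> z - grid_floor N (fst z)\<bar> < \<delta>/2"
      "\<bar>comp_seq f n (\<phi> z) - grid_floor N (snd z)\<bar> < \<delta>/2"
      using ch grid[OF z] unfolding \<phi>_def by auto
    ultimately show "\<bar>\<phi> z - fst z\<bar> < \<delta> \<and> \<bar>comp_seq f n (\<phi> z) - snd z\<bar> < \<delta>"
      by linarith
  qed
  ultimately have "transport_map \<delta> (comp_seq f n) \<phi>"
    by (simp add: transport_map_def)
  then show ?thesis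
    using n(1) by blast
qed

theorem (in wm3_interval_system) weakly_mixing_order_pushforward:
  "weakly_mixing_order m weak_star_topology_I (\<lambda>n. pushforward_I (f n))"
  unfolding weakly_mixing_order_def
proof (intro allI impI)
  fix U V :: "nat \<Rightarrow> real measure set"
  assume UV: "\<forall>i<m. openin weak_star_topology_I (U i) \<and> U i \<noteq> {} \<and>
                    openin weak_star_topology_I (V i) \<and> V i \<noteq> {}"
  have "\<forall>\<^sub>F \<delta> in at_right 0. \<forall>i\<in>{..<m}. \<forall>h \<phi>. continuous_on {0..1} h \<longrightarrow> h ` {0..1} \<subseteq> {0..1} \<longrightarrow>
      transport_map \<delta> h \<phi> \<longrightarrow> (\<exists>\<rho>\<in>U i. distr \<rho> borel_I h \<in> V i)"
  proof (intro eventually_ball_finite finite_lessThan ballI)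
    fix i assume "i \<in> {..<m}"
    then show "\<forall>\<^sub>F \<delta> in at_right 0. \<forall>h \<phi>. continuous_on {0..1} h \<longrightarrow> h ` {0..1} \<subseteq> {0..1} \<longrightarrow>
        transport_map \<delta> h \<phi> \<longrightarrow> (\<exists>\<rho>\<in>U i. distr \<rho> borel_I h \<in> V i)"
      using UV by (intro eventually_transport_meets) auto
  qed
  then have "\<forall>\<^sub>F \<delta> in at_right (0::real). \<exists>n\<ge>1. \<forall>i<m. comp_seq (\<lambda>n. pushforward_I (f n)) n ` U i \<inter> V i \<noteq> {}"
    using eventually_at_right_less
  proof eventually_elim
    case (elim \<delta>)
    then obtain n \<phi> where n: "n \<ge> 1" "transport_map \<delta> (comp_seq f n) \<phi>"
      using approximate_transport_map[OF elim(2)] by blast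
    have "comp_seq (\<lambda>n. pushforward_I (f n)) n ` U i \<inter> V i \<noteq> {}" if i: "i < m" for i
    proof -
      obtain \<rho> where \<rho>: "\<rho> \<in> U i" "distr \<rho> borel_I (comp_seq f n) \<in> V i"
        using elim(1)[rule_format, of i "comp_seq f n" \<phi>] i continuous_on_comp_seq
          comp_seq_image_subset n(2) by auto
      moreover have "\<rho> \<in> prob_measures_I"
        using \<rho>(1) UV i openin_weak_star_subset by blast
      ultimately show ?thesis
        using comp_seq_pushforward by (metis IntI empty_iff imageI)
    qed
    then show ?case
      using n(1) by blast
  qed
  then show "\<exists>n\<ge>1. \<forall>i<m. comp_seq (\<lambda>n. pushforward_I (f n)) n ` U i \<inter> V i \<noteq> {}"
    using eventually_happens'[OF trivial_limit_at_right_real] by blast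
qed

definition bump :: "real \<Rightarrow> real \<Rightarrow> real \<Rightarrow> real" where
  "bump c r t = max 0 (1 - \<bar>t - c\<bar> / r)"

lemma continuous_on_bump: "continuous_on A (bump c r)"
  unfolding bump_def divide_inverse by (intro continuous_intros)

lemma bump_centre: "bump c r c = 1"
  by (simp add: bump_def)

lemma bump_le_one: "0 < r \<Longrightarrow> bump c r t \<le> 1"
  by (simp add: bump_def)

lemma bump_pos_imp_close: "0 < r \<Longrightarrow> 0 < bump c r t \<Longrightarrow> \<bar>t - c\<bar> < r"
  by (auto simp: bump_def max_def divide_less_eq split: if_splits)

lemma (in prob_space) exists_gt_of_integral_gt:
  fixes g :: "'a \<Rightarrow> real"
  assumes "integrable M g" "c < (\<integral>x. g x \<partial>M)"
  shows "\<exists>x\<in>space M. c < g x"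
proof (rule ccontr)
  assume "\<not> ?thesis"
  then have "(\<integral>x. g x \<partial>M) \<le> c"
    using assms(1) by (intro integral_le_const AE_I2) auto
  with assms(2) show False
    by simp
qed

definition concentrated_measures :: "real set \<Rightarrow> real measure set" where
  "concentrated_measures U =
     {\<mu> \<in> prob_measures_I. \<exists>c r. 0 < r \<and> ball_I c r \<subseteq> U \<and> 1/2 < (\<integral>t. bump c r t \<partial>\<mu>)}"

lemma openin_concentrated_measures: "openin weak_star_topology_I (concentrated_measures U)"
proof -
  have "concentrated_measures U = \<Union>{{\<mu> \<in> prob_measures_I. (\<integral>t. bump c r t \<partial>\<mu>) \<in> {1/2<..}} | c r.
          0 < r \<and> ball_I c r \<subseteq> U}"
    by (auto simp: concentrated_measures_def)
  also have "openin weak_star_topology_I \<dots>"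
  proof (intro openin_Union ballI)
    fix S assume "S \<in> {{\<mu> \<in> prob_measures_I. (\<integral>t. bump c r t \<partial>\<mu>) \<in> {1/2<..}} | c r.
        0 < r \<and> ball_I c r \<subseteq> U}"
    then obtain c r where "S = {\<mu> \<in> prob_measures_I. (\<integral>t. bump c r t \<partial>\<mu>) \<in> {1/2<..}}"
      by blast
    then show "openin weak_star_topology_I S"
      using openin_weak_star_basic[OF continuous_on_bump open_greaterThan, of c r "1/2"] by simp
  qed
  finally show ?thesis .
qed

lemma return_in_concentrated_measures:
  assumes "openin (top_of_set {0..1}) U" "x \<in> U"
  shows "return borel_I x \<in> concentrated_measures U"
proof -
  obtain r where "0 < r" "ball_I x r \<subseteq> U"
    using openin_contains_ball_I[OF assms] .
  moreover have "x \<in> {0..1}"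
    using assms openin_imp_subset by blast
  moreover have "(\<integral>t. bump x r t \<partial>return borel_I x) = 1"
    using integral_return_I[OF \<open>x \<in> {0..1}\<close> continuous_on_bump] by (simp add: bump_centre)
  ultimately have "0 < r \<and> ball_I x r \<subseteq> U \<and> 1/2 < (\<integral>t. bump x r t \<partial>return borel_I x)"
    by simp
  then show ?thesis
    using return_in_prob_measures_I[OF \<open>x \<in> {0..1}\<close>] unfolding concentrated_measures_def by blast
qed

text \<open>The two bump integrals exceed \<open>1/2\<close>, so their sum is \<open>> 1\<close> at some point, where both bumps are positive.\<close>

lemma concentrated_measures_image_meets:
  assumes h: "continuous_on {0..1} h" "h ` {0..1} \<subseteq> {0..1}"
    and \<mu>: "\<mu> \<in> concentrated_measures U" "distr \<mu> borel_I h \<in> concentrated_measures V"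
  shows "h ` U \<inter> V \<noteq> {}"
proof -
  obtain c r d s where cr: "0 < r" "ball_I c r \<subseteq> U" "1/2 < (\<integral>t. bump c r t \<partial>\<mu>)"
    and ds: "0 < s" "ball_I d s \<subseteq> V" "1/2 < (\<integral>t. bump d s t \<partial>distr \<mu> borel_I h)"
    using \<mu> by (auto simp: concentrated_measures_def)
  have PM: "\<mu> \<in> prob_measures_I"
    using \<mu>(1) by (simp add: concentrated_measures_def)
  have h_meas: "h \<in> measurable \<mu> borel_I"
    unfolding measurable_prob_measures_I[OF PM] by (rule measurable_self_map_I[OF h])
  have "continuous_on {0..1} (\<lambda>t. bump c r t + bump d s (h t))"
    using h by (intro continuous_intros continuous_on_compose2[OF continuous_on_bump[of UNIV]]) auto
  then have int: "integrable \<mu> (\<lambda>t. bump c r t + bump d s (h t))"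
    by (rule integrable_continuous_on_I[OF PM])
  have "(\<integral>t. bump d s t \<partial>distr \<mu> borel_I h) = (\<integral>t. bump d s (h t) \<partial>\<mu>)"
    by (rule integral_distr[OF h_meas borel_measurable_continuous_on_I[OF continuous_on_bump]])
  moreover have "(\<integral>t. bump c r t + bump d s (h t) \<partial>\<mu>) = (\<integral>t. bump c r t \<partial>\<mu>) + (\<integral>t. bump d s (h t) \<partial>\<mu>)"
    using h by (intro Bochner_Integration.integral_add integrable_continuous_on_I[OF PM]
        continuous_on_bump continuous_on_compose2[OF continuous_on_bump[of UNIV]]) auto
  ultimately have "1 < (\<integral>t. bump c r t + bump d s (h t) \<partial>\<mu>)"
    using cr(3) ds(3) by simp
  then obtain t where t: "t \<in> {0..1}" "1 < bump c r t + bump d s (h t)"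
    using prob_space.exists_gt_of_integral_gt[OF prob_measures_I_D(1)[OF PM] int]
      prob_measures_I_D(3)[OF PM] by blast
  then have "0 < bump c r t" "0 < bump d s (h t)"
    using bump_le_one[OF cr(1), of c t] bump_le_one[OF ds(1), of d "h t"] by linarith+
  then have "t \<in> ball_I c r" "h t \<in> ball_I d s"
    using bump_pos_imp_close cr(1) ds(1) t(1) h(2) by (auto simp: ball_I_def image_subset_iff)
  then show ?thesis
    using cr(2) ds(2) by blast
qed

theorem (in interval_system) weakly_mixing_order_of_pushforward:
  assumes wm: "weakly_mixing_order m weak_star_topology_I (\<lambda>n. pushforward_I (f n))"
  shows "weakly_mixing_order m (top_of_set {0..1}) f"
  unfolding weakly_mixing_order_def
proof (intro allI impI)
  fix U V :: "nat \<Rightarrow> real set"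
  assume UV: "\<forall>i<m. openin (top_of_set {0..1}) (U i) \<and> U i \<noteq> {} \<and>
                    openin (top_of_set {0..1}) (V i) \<and> V i \<noteq> {}"
  then have C: "\<forall>i<m. openin weak_star_topology_I (concentrated_measures (U i)) \<and>
      concentrated_measures (U i) \<noteq> {} \<and> openin weak_star_topology_I (concentrated_measures (V i)) \<and>
      concentrated_measures (V i) \<noteq> {}"
    using openin_concentrated_measures return_in_concentrated_measures by blast
  have "\<exists>n\<ge>1. \<forall>i<m. comp_seq (\<lambda>n. pushforward_I (f n)) n `
      concentrated_measures (U i) \<inter> concentrated_measures (V i) \<noteq> {}"
    using C by (intro weakly_mixing_orderD[OF wm]) blast
  then obtain n where n: "n \<ge> 1" "\<forall>i<m. comp_seq (\<lambda>n. pushforward_I (f n)) n `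
      concentrated_measures (U i) \<inter> concentrated_measures (V i) \<noteq> {}"
    by blast
  have "comp_seq f n ` U i \<inter> V i \<noteq> {}" if i: "i < m" for i
  proof -
    obtain \<mu> where \<mu>: "\<mu> \<in> concentrated_measures (U i)"
      "comp_seq (\<lambda>n. pushforward_I (f n)) n \<mu> \<in> concentrated_measures (V i)"
      using n(2) i by blast
    then have "distr \<mu> borel_I (comp_seq f n) \<in> concentrated_measures (V i)"
      using comp_seq_pushforward by (simp add: concentrated_measures_def)
    then show ?thesis
      using concentrated_measures_image_meets[OF continuous_on_comp_seq comp_seq_image_subset \<mu>(1)]
      by blast
  qed
  then show "\<exists>n\<ge>1. \<forall>i<m. comp_seq f n ` U i \<inter> V i \<noteq> {}"
    using n(1) by blast
qed

theorem mainTheorem6: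
  fixes f :: "nat \<Rightarrow> real \<Rightarrow> real"
  assumes cont: "\<And>n. n \<ge> 1 \<Longrightarrow> continuous_on {0..1} (f n)"
    and self: "\<And>n. n \<ge> 1 \<Longrightarrow> f n ` {0..1} \<subseteq> {0..1}"
  shows "weakly_mixing_order 3 (subtopology euclideanreal {0..1}) f \<longleftrightarrow>
         weakly_mixing_order 3 weak_star_topology_I (\<lambda>n. pushforward_I (f n))"
proof
  interpret interval_system f
    using cont self by unfold_locales
  assume "weakly_mixing_order 3 (subtopology euclideanreal {0..1}) f"
  then interpret wm3_interval_system f
    by unfold_locales
  show "weakly_mixing_order 3 weak_star_topology_I (\<lambda>n. pushforward_I (f n))"
    by (rule weakly_mixing_order_pushforward)
next
  interpret interval_system f
    using cont self by unfold_locales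
  show "weakly_mixing_order 3 (subtopology euclideanreal {0..1}) f"
    if "weakly_mixing_order 3 weak_star_topology_I (\<lambda>n. pushforward_I (f n))"
    using that by (rule weakly_mixing_order_of_pushforward)
qed

end
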